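(* Let $K\ge 2$ and let $p,q$ be real numbers with $0<q<p$ and $q=\frac{1-p}{K-1}$. Let $N\ge 1$ and let $y_1,\dots,y_N\in\{1,\dots,K\}$ be observed outputs of the randomized response mechanism, with empirical histogram $\phi\in\Delta$, $\phi_y=\frac{1}{N}|\{u: y_u=y\}|$. Then the likelihood $L(\theta\mid\phi)=\prod_{u=1}^N\bigl(q+(p-q)\theta_{y_u}\bigr)$ has a unique maximizer over $\theta\in\Delta$, and this maximizer equals $\mathrm{MLE}^*(\phi)$.
   Context: $\Delta=\{\theta\in\mathbb{R}^K:\theta_i\ge 0,\ \sum_i\theta_i=1\}$. The randomized response (RR) mechanism on $\{1,\dots,K\}$ outputs, on input $x$, the value $y$ with probability $p$ if $y=x$ and $q$ otherwise; thus if the input is distributed according to $\theta\in\Delta$, the output $y$ has probability $q+(p-q)\theta_y$. Throughout, RR is an $\varepsilon$-locally differentially private mechanism with $\varepsilon=\log(p/q)>0$, so $0<q<p$. Define $\mathrm{MLE}^*(\phi)$ as follows. For a real $\tau$ let $m(\tau)=|\{i:\phi_i<\tau\}|$ and, when $\sum_{i:\phi_i\ge\tau}\phi_i>0$, $c_\tau=\frac{1-m(\tau)\,q}{\sum_{i:\phi_i\ge\tau}\phi_i}$. Let $\tau^*$ be the smallest $\tau\in\{\phi_1,\dots,\phi_K\}$ such that $c_\tau\phi_i\ge q$ for every $i$ with $\phi_i\ge\tau$. Then $\mathrm{MLE}^*(\phi)_i=0$ if $\phi_i<\tau^*$ and $\mathrm{MLE}^*(\phi)_i=\frac{c_{\tau^*}\phi_i-q}{p-q}$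 otherwise. *)

theory Defs
  imports Complex_Main
begin

definition simplex :: "nat \<Rightarrow> (nat \<Rightarrow> real) set" where
  "simplex K = {\<theta>. (\<forall>i\<in>{1..K}. 0 \<le> \<theta> i) \<and> (\<forall>i. i \<notin> {1..K} \<longrightarrow> \<theta> i = 0)
                    \<and> (\<Sum>i\<in>{1..K}. \<theta> i) = 1}"

definition hist :: "nat \<Rightarrow> (nat \<Rightarrow> nat) \<Rightarrow> nat \<Rightarrow> real" where
  "hist N y i = real (card {u\<in>{1..N}. y u = i}) / real N"

definition rr_lik :: "real \<Rightarrow> real \<Rightarrow> nat \<Rightarrow> (nat \<Rightarrow> nat) \<Rightarrow> (nat \<Rightarrow> real) \<Rightarrow> real" where
  "rr_lik p q N y \<theta> = (\<Prod>u\<in>{1..N}. q + (p - q) * \<theta> (y u))"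

definition mcount :: "nat \<Rightarrow> (nat \<Rightarrow> real) \<Rightarrow> real \<Rightarrow> nat" where
  "mcount K \<phi> \<tau> = card {i\<in>{1..K}. \<phi> i < \<tau>}"

definition upper_sum :: "nat \<Rightarrow> (nat \<Rightarrow> real) \<Rightarrow> real \<Rightarrow> real" where
  "upper_sum K \<phi> \<tau> = (\<Sum>i\<in>{i\<in>{1..K}. \<tau> \<le> \<phi> i}. \<phi> i)"

definition cconst :: "real \<Rightarrow> nat \<Rightarrow> (nat \<Rightarrow> real) \<Rightarrow> real \<Rightarrow> real" where
  "cconst q K \<phi> \<tau> = (1 - real (mcount K \<phi> \<tau>) * q) / upper_sum K \<phi> \<tau>"

definition tau_star :: "real \<Rightarrow> nat \<Rightarrow> (nat \<Rightarrow> real) \<Rightarrow> real" where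
  "tau_star q K \<phi> = Min {\<tau>. \<tau> \<in> \<phi> ` {1..K} \<and> 0 < upper_sum K \<phi> \<tau> \<and>
        (\<forall>i\<in>{1..K}. \<tau> \<le> \<phi> i \<longrightarrow> q \<le> cconst q K \<phi> \<tau> * \<phi> i)}"

definition MLE_star :: "real \<Rightarrow> real \<Rightarrow> nat \<Rightarrow> (nat \<Rightarrow> real) \<Rightarrow> nat \<Rightarrow> real" where
  "MLE_star p q K \<phi> i =
     (if i \<in> {1..K} \<and> tau_star q K \<phi> \<le> \<phi> i
      then (cconst q K \<phi> (tau_star q K \<phi>) * \<phi> i - q) / (p - q) else 0)"

end

(*
  Put z i = q + (p - q) * \<theta> i. Since K q + (p - q) = 1, \<theta> ranges over the simplex exactly
  when z i \<ge> q and \<Sum>i z i = 1, and ln L(\<theta> | \<phi>) = N \<Sum>i \<phi> i ln (z i).  This concave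
  problem is solved by water filling: z i = max q (c \<phi> i) with c chosen so that the z i
  sum to 1.  Termwise, \<phi> i ln (z i / max q (c \<phi> i)) \<le> (z i - max q (c \<phi> i)) / c by
  ln x \<le> x - 1, strictly unless z i = max q (c \<phi> i); summing, the right-hand sides cancel,
  which gives optimality and uniqueness.
  Writing c = q / \<mu>, the water level \<mu> is the root of the strictly increasing function
  t \<mapsto> t - q \<Sum>i max (\<phi> i) t.  The admissible thresholds of MLE* are exactly the values
  \<phi> i \<ge> \<mu>; hence \<tau>* is the least of them, cconst at \<tau>* equals q / \<mu>, and MLE*(\<phi>)
  is the water-filling solution.
*)
theory Submission
  imports Defs
begin

lemma ln_less_minus_one: "0 < x \<Longrightarrow> x \<noteq> 1 \<Longrightarrow> ln x < x - 1"
  for x :: real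
  using ln_le_minus_one ln_eq_minus_one by fastforce

lemma mult_ln_less_water_level:
  fixes q c w z :: real
  assumes "0 < q" "0 < c" "0 \<le> w" "q \<le> z" "z \<noteq> max q (c * w)"
  shows "w * ln z < w * ln (max q (c * w)) + (z - max q (c * w)) / c"
proof (cases "q \<le> c * w")
  case True
  then have m: "max q (c * w) = c * w" by simp
  have "0 < c * w" using True assms(1) by linarith
  then have "0 < w" using assms(2) by (simp add: zero_less_mult_iff)
  have "0 < z / (c * w)" "z / (c * w) \<noteq> 1" using assms(1,4,5) m \<open>0 < c * w\<close> by auto
  then have "w * ln (z / (c * w)) < w * (z / (c * w) - 1)"
    using \<open>0 < w\<close> ln_less_minus_one by simp
  moreover have "ln (z / (c * w)) = ln z - ln (c * w)"
    using assms(1,4) \<open>0 < c * w\<close> by (intro ln_divide_pos) auto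
  moreover have "w * (z / (c * w) - 1) = (z - c * w) / c"
    using \<open>0 < w\<close> assms(2) by (simp add: field_simps)
  ultimately show ?thesis unfolding m by (simp add: right_diff_distrib)
next
  case False
  then have m: "max q (c * w) = q" and "z - q > 0" "w / q < 1 / c"
    using assms by (auto simp: field_simps)
  have "w * (ln z - ln q) \<le> w * (z / q - 1)"
    using ln_le_minus_one[of "z / q"] ln_divide_pos[of z q] assms by (intro mult_left_mono) auto
  also have "\<dots> = w / q * (z - q)"
    using assms(1) by (simp add: field_simps)
  also have "\<dots> < 1 / c * (z - q)"
    using \<open>z - q > 0\<close> \<open>w / q < 1 / c\<close> by (intro mult_strict_right_mono)
  also have "\<dots> = (z - q) / c" by simp
  finally show ?thesis unfolding m by (simp add: right_diff_distrib)
qed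

lemma sum_mult_ln_less_water_filling:
  fixes w z :: "'a \<Rightarrow> real"
  assumes "finite I" "0 < q" "0 < c"
    and "\<forall>i\<in>I. 0 \<le> w i" "\<forall>i\<in>I. q \<le> z i"
    and "(\<Sum>i\<in>I. z i) = (\<Sum>i\<in>I. max q (c * w i))"
    and "\<exists>i\<in>I. z i \<noteq> max q (c * w i)"
  shows "(\<Sum>i\<in>I. w i * ln (z i)) < (\<Sum>i\<in>I. w i * ln (max q (c * w i)))"
proof -
  let ?m = "\<lambda>i. max q (c * w i)"
  have less: "w i * ln (z i) < w i * ln (?m i) + (z i - ?m i) / c"
    if "i \<in> I" "z i \<noteq> ?m i" for i
    using assms(2-5) that by (intro mult_ln_less_water_level) auto
  have "(\<Sum>i\<in>I. w i * ln (z i)) < (\<Sum>i\<in>I. w i * ln (?m i) + (z i - ?m i) / c)"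
  proof (rule sum_strict_mono_ex1)
    show "\<forall>i\<in>I. w i * ln (z i) \<le> w i * ln (?m i) + (z i - ?m i) / c"
    proof
      fix i assume "i \<in> I"
      then show "w i * ln (z i) \<le> w i * ln (?m i) + (z i - ?m i) / c"
        using less[of i] by (cases "z i = ?m i") simp_all
    qed
    show "\<exists>i\<in>I. w i * ln (z i) < w i * ln (?m i) + (z i - ?m i) / c"
      using assms(7) less by blast
  qed (rule assms(1))
  also have "\<dots> = (\<Sum>i\<in>I. w i * ln (?m i)) + ((\<Sum>i\<in>I. z i) - (\<Sum>i\<in>I. ?m i)) / c"
    by (simp add: sum.distrib sum_subtractf flip: sum_divide_distrib)
  finally show ?thesis using assms(6) by simp
qed

definition level_excess :: "real \<Rightarrow> nat \<Rightarrow> (nat \<Rightarrow> real) \<Rightarrow> real \<Rightarrow> real" where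
  "level_excess q K \<phi> t = t - q * (\<Sum>i\<in>{1..K}. max (\<phi> i) t)"

lemma sum_max_eq_upper_sum_mcount:
  "(\<Sum>i\<in>{1..K}. max (\<phi> i) t) = upper_sum K \<phi> t + real (mcount K \<phi> t) * t"
proof -
  have sets: "{1..K} \<inter> {i. t \<le> \<phi> i} = {i\<in>{1..K}. t \<le> \<phi> i}"
    "{1..K} \<inter> - {i. t \<le> \<phi> i} = {i\<in>{1..K}. \<phi> i < t}"
    by auto
  have "(\<Sum>i\<in>{1..K}. max (\<phi> i) t) = (\<Sum>i\<in>{1..K}. if t \<le> \<phi> i then \<phi> i else t)"
    by (intro sum.cong) auto
  also have "\<dots> = sum \<phi> ({1..K} \<inter> {i. t \<le> \<phi> i}) + (\<Sum>i\<in>{1..K} \<inter> - {i. t \<le> \<phi> i}. t)"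
    by (rule sum.If_cases) simp
  also have "\<dots> = upper_sum K \<phi> t + real (mcount K \<phi> t) * t"
    unfolding sets upper_sum_def mcount_def by simp
  finally show ?thesis .
qed

lemma mcount_le: "mcount K \<phi> t \<le> K"
proof -
  have "card {i\<in>{1..K}. \<phi> i < t} \<le> card {1..K}"
    by (rule card_mono) auto
  then show ?thesis by (simp add: mcount_def)
qed

lemma level_excess_strict_mono:
  assumes "0 \<le> q" "real K * q < 1" "s < t"
  shows "level_excess q K \<phi> s < level_excess q K \<phi> t"
proof -
  have "(\<Sum>i\<in>{1..K}. max (\<phi> i) t) - (\<Sum>i\<in>{1..K}. max (\<phi> i) s) \<le> (\<Sum>i\<in>{1..K}. t - s)"
    unfolding sum_subtractf[symmetric] using assms(3) by (intro sum_mono) (auto simp: max_def)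
  then have "q * ((\<Sum>i\<in>{1..K}. max (\<phi> i) t) - (\<Sum>i\<in>{1..K}. max (\<phi> i) s))
      \<le> q * (real K * (t - s))"
    using assms(1) by (intro mult_left_mono) simp_all
  also have "\<dots> = real K * q * (t - s)" by simp
  also have "\<dots> < t - s"
    using mult_strict_right_mono[OF assms(2), of "t - s"] assms(3) by simp
  finally show ?thesis
    unfolding level_excess_def by (simp add: right_diff_distrib)
qed

lemma level_excess_root:
  assumes "0 < q" "real K * q < 1" "\<forall>i\<in>{1..K}. 0 \<le> \<phi> i" "(\<Sum>i\<in>{1..K}. \<phi> i) = 1"
  obtains \<mu> where "0 < \<mu>" "level_excess q K \<phi> \<mu> = 0"
proof -
  have le1: "\<phi> i \<le> 1" if "i \<in> {1..K}" for i
    using member_le_sum[OF that, of \<phi>] assms(3,4) by simp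
  have at0: "level_excess q K \<phi> 0 = - q"
    using assms(3,4) by (simp add: level_excess_def max_absorb1)
  have at1: "level_excess q K \<phi> 1 = 1 - real K * q"
    using le1 by (simp add: level_excess_def max_absorb2)
  have "continuous_on {0..1} (level_excess q K \<phi>)"
    unfolding level_excess_def [abs_def] by (intro continuous_intros)
  then have "\<exists>\<mu>. 0 \<le> \<mu> \<and> \<mu> \<le> 1 \<and> level_excess q K \<phi> \<mu> = 0"
    using at0 at1 assms(1,2) by (intro IVT') simp_all
  then obtain \<mu> where \<mu>: "0 \<le> \<mu>" "level_excess q K \<phi> \<mu> = 0"
    by blast
  have "0 < \<mu>" using \<mu> at0 assms(1) by (cases "\<mu> = 0") auto
  then show ?thesis using \<mu>(2) by (rule that)
qed

lemma cconst_mult_ge_iff: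
  assumes "0 < upper_sum K \<phi> t"
  shows "q \<le> cconst q K \<phi> t * t \<longleftrightarrow> 0 \<le> level_excess q K \<phi> t"
proof -
  let ?S = "upper_sum K \<phi> t" and ?m = "real (mcount K \<phi> t)"
  have "cconst q K \<phi> t * t = (1 - ?m * q) * t / ?S"
    by (simp add: cconst_def)
  then have "q \<le> cconst q K \<phi> t * t \<longleftrightarrow> q * ?S \<le> (1 - ?m * q) * t"
    using assms by (simp add: pos_le_divide_eq)
  also have "\<dots> \<longleftrightarrow> 0 \<le> level_excess q K \<phi> t"
    unfolding level_excess_def sum_max_eq_upper_sum_mcount by (simp add: algebra_simps)
  finally show ?thesis .
qed

lemma tau_star_eq_Min_above_level:
  assumes "0 < q" "real K * q < 1" "0 < \<mu>" "level_excess q K \<phi> \<mu> = 0"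
  shows "tau_star q K \<phi> = Min {t \<in> \<phi> ` {1..K}. \<mu> \<le> t}"
proof -
  let ?T = "{t. t \<in> \<phi> ` {1..K} \<and> 0 < upper_sum K \<phi> t \<and>
      (\<forall>i\<in>{1..K}. t \<le> \<phi> i \<longrightarrow> q \<le> cconst q K \<phi> t * \<phi> i)}"
  have "?T = {t \<in> \<phi> ` {1..K}. \<mu> \<le> t}"
  proof (intro equalityI subsetI)
    fix t assume "t \<in> ?T"
    then obtain j where j: "j \<in> {1..K}" "t = \<phi> j" and S: "0 < upper_sum K \<phi> t"
      and "q \<le> cconst q K \<phi> t * t"
      by auto
    then have "level_excess q K \<phi> \<mu> \<le> level_excess q K \<phi> t"
      using cconst_mult_ge_iff[OF S] assms(4) by simp
    then have "\<mu> \<le> t"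
      using level_excess_strict_mono[of q K t \<mu> \<phi>] assms(1,2) by fastforce
    then show "t \<in> {t \<in> \<phi> ` {1..K}. \<mu> \<le> t}" using j by simp
  next
    fix t assume "t \<in> {t \<in> \<phi> ` {1..K}. \<mu> \<le> t}"
    then obtain j where j: "j \<in> {1..K}" "t = \<phi> j" "\<mu> \<le> t" by auto
    have S: "0 < upper_sum K \<phi> t"
      unfolding upper_sum_def using j assms(3) by (intro sum_pos) auto
    have "level_excess q K \<phi> \<mu> \<le> level_excess q K \<phi> t"
      using level_excess_strict_mono[of q K \<mu> t \<phi>] assms(1,2) j(3) by (cases "\<mu> = t") auto
    then have ct: "q \<le> cconst q K \<phi> t * t"
      using cconst_mult_ge_iff[OF S] assms(4) by simp
    have "real (mcount K \<phi> t) * q \<le> real K * q"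
      using mcount_le assms(1) by (intro mult_right_mono) simp_all
    then have c0: "0 \<le> cconst q K \<phi> t"
      unfolding cconst_def using S assms(2) by simp
    have "q \<le> cconst q K \<phi> t * \<phi> i" if "t \<le> \<phi> i" for i
      using ct mult_left_mono[OF that c0] by linarith
    then show "t \<in> ?T" using j S by auto
  qed
  then show ?thesis unfolding tau_star_def by simp
qed

lemma tau_star_water_level:
  assumes "0 < q" "real K * q < 1" "0 < \<mu>" "level_excess q K \<phi> \<mu> = 0"
  shows "\<And>i. i \<in> {1..K} \<Longrightarrow> tau_star q K \<phi> \<le> \<phi> i \<longleftrightarrow> \<mu> \<le> \<phi> i"
    and "cconst q K \<phi> (tau_star q K \<phi>) = q / \<mu>"
proof -
  let ?A = "{t \<in> \<phi> ` {1..K}. \<mu> \<le> t}"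
  have "?A \<noteq> {}"
  proof
    assume "?A = {}"
    then have "max (\<phi> i) \<mu> = \<mu>" if "i \<in> {1..K}" for i
      using that by fastforce
    then have "level_excess q K \<phi> \<mu> = \<mu> * (1 - real K * q)"
      by (simp add: level_excess_def algebra_simps)
    also have "\<dots> > 0" using assms(2,3) by simp
    finally show False using assms(4) by simp
  qed
  have "finite ?A" by simp
  have "Min ?A \<in> ?A" using \<open>finite ?A\<close> \<open>?A \<noteq> {}\<close> by (rule Min_in)
  moreover have "Min ?A \<le> t" if "t \<in> ?A" for t using \<open>finite ?A\<close> that by (rule Min_le)
  ultimately have \<tau>: "tau_star q K \<phi> \<in> ?A" "\<And>t. t \<in> ?A \<Longrightarrow> tau_star q K \<phi> \<le> t"
    unfolding tau_star_eq_Min_above_level[OF assms] by blast+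
  then show iff: "tau_star q K \<phi> \<le> \<phi> i \<longleftrightarrow> \<mu> \<le> \<phi> i" if "i \<in> {1..K}" for i
    using that by force
  have sets: "{i\<in>{1..K}. tau_star q K \<phi> \<le> \<phi> i} = {i\<in>{1..K}. \<mu> \<le> \<phi> i}"
    "{i\<in>{1..K}. \<phi> i < tau_star q K \<phi>} = {i\<in>{1..K}. \<phi> i < \<mu>}"
    using iff by (auto simp: not_le[symmetric])
  obtain j where j: "j \<in> {1..K}" "\<mu> \<le> \<phi> j" using \<tau>(1) by auto
  have S: "0 < upper_sum K \<phi> \<mu>"
    unfolding upper_sum_def using j assms(3) by (intro sum_pos) auto
  have "\<mu> * (1 - real (mcount K \<phi> \<mu>) * q) = q * upper_sum K \<phi> \<mu>"
    using assms(4) unfolding level_excess_def sum_max_eq_upper_sum_mcount by (simp add: algebra_simps)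
  moreover have "upper_sum K \<phi> (tau_star q K \<phi>) = upper_sum K \<phi> \<mu>"
    "mcount K \<phi> (tau_star q K \<phi>) = mcount K \<phi> \<mu>"
    unfolding upper_sum_def mcount_def sets by simp_all
  ultimately show "cconst q K \<phi> (tau_star q K \<phi>) = q / \<mu>"
    unfolding cconst_def using S assms(3) by (simp add: field_simps)
qed

lemma MLE_star_water_filling:
  assumes "0 < q" "q < p" "real K * q < 1" "\<forall>i\<in>{1..K}. 0 \<le> \<phi> i" "(\<Sum>i\<in>{1..K}. \<phi> i) = 1"
  obtains c where "0 < c"
    and "\<And>i. i \<in> {1..K} \<Longrightarrow> q + (p - q) * MLE_star p q K \<phi> i = max q (c * \<phi> i)"
    and "(\<Sum>i\<in>{1..K}. max q (c * \<phi> i)) = 1"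
proof -
  obtain \<mu> where \<mu>: "0 < \<mu>" "level_excess q K \<phi> \<mu> = 0"
    using level_excess_root[OF assms(1,3-5)] .
  note \<tau> = tau_star_water_level[OF assms(1,3) \<mu>]
  have ge_iff: "q \<le> q / \<mu> * x \<longleftrightarrow> \<mu> \<le> x" for x
    using \<mu>(1) assms(1) by (simp add: field_simps)
  show ?thesis
  proof
    show "0 < q / \<mu>" using assms(1) \<mu>(1) by simp
    show "q + (p - q) * MLE_star p q K \<phi> i = max q (q / \<mu> * \<phi> i)" if "i \<in> {1..K}" for i
      using that \<tau> ge_iff[of "\<phi> i"] assms(2) by (auto simp: MLE_star_def max_def)
    have "max q (q / \<mu> * x) = q / \<mu> * max x \<mu>" for x
      using \<mu>(1) assms(1) by (simp add: max_mult_distrib_left max.commute)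
    then have "(\<Sum>i\<in>{1..K}. max q (q / \<mu> * \<phi> i)) = q / \<mu> * (\<Sum>i\<in>{1..K}. max (\<phi> i) \<mu>)"
      by (simp add: sum_distrib_left)
    also have "(\<Sum>i\<in>{1..K}. max (\<phi> i) \<mu>) = \<mu> / q"
      using \<mu>(2) assms(1) by (simp add: level_excess_def field_simps)
    finally show "(\<Sum>i\<in>{1..K}. max q (q / \<mu> * \<phi> i)) = 1"
      using \<mu>(1) assms(1) by simp
  qed
qed

lemma MLE_star_in_simplex:
  assumes "0 < q" "q < p" "real K * q + (p - q) = 1"
    and "\<forall>i\<in>{1..K}. 0 \<le> \<phi> i" "(\<Sum>i\<in>{1..K}. \<phi> i) = 1"
  shows "MLE_star p q K \<phi> \<in> simplex K"
proof -
  obtain c where c: "\<And>i. i \<in> {1..K} \<Longrightarrow> q + (p - q) * MLE_star p q K \<phi> i = max q (c * \<phi> i)"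
    and sum_c: "(\<Sum>i\<in>{1..K}. max q (c * \<phi> i)) = 1"
    using MLE_star_water_filling[OF assms(1,2) _ assms(4,5)] assms(2,3) by auto
  have "0 \<le> (p - q) * MLE_star p q K \<phi> i" if "i \<in> {1..K}" for i
    using c[OF that] by simp
  then have "0 \<le> MLE_star p q K \<phi> i" if "i \<in> {1..K}" for i
    using that assms(2) by (simp add: zero_le_mult_iff)
  moreover have "(p - q) * (\<Sum>i\<in>{1..K}. MLE_star p q K \<phi> i) = p - q"
  proof -
    have "(p - q) * (\<Sum>i\<in>{1..K}. MLE_star p q K \<phi> i) = (\<Sum>i\<in>{1..K}. max q (c * \<phi> i) - q)"
      unfolding sum_distrib_left using c by (intro sum.cong) (auto simp: algebra_simps)
    then show ?thesis using sum_c assms(3) by (simp add: sum_subtractf)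
  qed
  then have "(\<Sum>i\<in>{1..K}. MLE_star p q K \<phi> i) = 1" using assms(2) by simp
  ultimately show ?thesis by (simp add: simplex_def MLE_star_def)
qed

lemma hist_nonneg [simp]: "0 \<le> hist N y i"
  by (simp add: hist_def)

lemma sum_comp_eq_hist:
  fixes g :: "nat \<Rightarrow> real"
  assumes "\<forall>u\<in>{1..N}. y u \<in> {1..K}"
  shows "(\<Sum>u\<in>{1..N}. g (y u)) = real N * (\<Sum>i\<in>{1..K}. hist N y i * g i)"
proof -
  have "(\<Sum>u\<in>{1..N}. g (y u)) = (\<Sum>i\<in>{1..K}. \<Sum>u\<in>{u\<in>{1..N}. y u = i}. g (y u))"
    using assms by (intro sum.group[symmetric]) auto
  also have "\<dots> = (\<Sum>i\<in>{1..K}. real (card {u\<in>{1..N}. y u = i}) * g i)"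
    by (intro sum.cong) auto
  also have "\<dots> = real N * (\<Sum>i\<in>{1..K}. hist N y i * g i)"
    by (cases "N = 0") (auto simp: hist_def sum_distrib_left)
  finally show ?thesis .
qed

lemma sum_hist:
  assumes "N \<ge> 1" "\<forall>u\<in>{1..N}. y u \<in> {1..K}"
  shows "(\<Sum>i\<in>{1..K}. hist N y i) = 1"
  using sum_comp_eq_hist[OF assms(2), of "\<lambda>_. 1"] assms(1) by simp

lemma ln_rr_lik:
  assumes "\<forall>u\<in>{1..N}. y u \<in> {1..K}" "\<forall>i\<in>{1..K}. 0 < q + (p - q) * \<theta> i"
  shows "0 < rr_lik p q N y \<theta>"
    and "ln (rr_lik p q N y \<theta>) = real N * (\<Sum>i\<in>{1..K}. hist N y i * ln (q + (p - q) * \<theta> i))"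
proof -
  have pos: "0 < q + (p - q) * \<theta> (y u)" if "u \<in> {1..N}" for u
    using assms that by blast
  show "0 < rr_lik p q N y \<theta>"
    unfolding rr_lik_def using pos by (rule prod_pos)
  have "ln (rr_lik p q N y \<theta>) = (\<Sum>u\<in>{1..N}. ln (q + (p - q) * \<theta> (y u)))"
    unfolding rr_lik_def using pos by (intro ln_prod) force+
  also have "\<dots> = real N * (\<Sum>i\<in>{1..K}. hist N y i * ln (q + (p - q) * \<theta> i))"
    by (rule sum_comp_eq_hist[OF assms(1)])
  finally show "ln (rr_lik p q N y \<theta>) = \<dots>" .
qed

lemma rr_lik_less_MLE_star:
  assumes "0 < q" "q < p" "real K * q + (p - q) = 1"
    and "N \<ge> 1" "\<forall>u\<in>{1..N}. y u \<in> {1..K}"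
    and "\<theta> \<in> simplex K" "\<theta> \<noteq> MLE_star p q K (hist N y)"
  shows "rr_lik p q N y \<theta> < rr_lik p q N y (MLE_star p q K (hist N y))"
proof -
  let ?\<phi> = "hist N y" and ?\<theta> = "MLE_star p q K (hist N y)"
  have "real K * q < 1" "\<forall>i\<in>{1..K}. 0 \<le> ?\<phi> i"
    using assms(2,3) by simp_all
  then obtain c where "0 < c"
    and c: "\<And>i. i \<in> {1..K} \<Longrightarrow> q + (p - q) * ?\<theta> i = max q (c * ?\<phi> i)"
    and sum_c: "(\<Sum>i\<in>{1..K}. max q (c * ?\<phi> i)) = 1"
    using MLE_star_water_filling[OF assms(1,2)] sum_hist[OF assms(4,5)] by metis
  define z where "z i = q + (p - q) * \<theta> i" for i
  have z_ge: "\<forall>i\<in>{1..K}. q \<le> z i"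
    using assms(2,6) by (simp add: z_def simplex_def)
  have z_sum: "(\<Sum>i\<in>{1..K}. z i) = 1"
    using assms(3,6) by (simp add: z_def simplex_def sum.distrib flip: sum_distrib_left)
  have "\<theta> i = ?\<theta> i" if "i \<notin> {1..K}" for i
    using that assms(6) unfolding simplex_def MLE_star_def by auto
  then obtain i where i: "i \<in> {1..K}" "\<theta> i \<noteq> ?\<theta> i"
    using assms(7) by (metis ext)
  have "z i \<noteq> max q (c * ?\<phi> i)"
    unfolding z_def c[OF i(1), symmetric] using i(2) assms(2) by simp
  then have less: "(\<Sum>i\<in>{1..K}. ?\<phi> i * ln (z i)) < (\<Sum>i\<in>{1..K}. ?\<phi> i * ln (max q (c * ?\<phi> i)))"
    using i(1) z_sum sum_c z_ge assms(1) \<open>0 < c\<close> by (intro sum_mult_ln_less_water_filling) auto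
  have pos: "\<forall>i\<in>{1..K}. 0 < q + (p - q) * \<theta> i" "\<forall>i\<in>{1..K}. 0 < q + (p - q) * ?\<theta> i"
    using z_ge c assms(1) by (auto simp: z_def)
  have "(\<Sum>i\<in>{1..K}. ?\<phi> i * ln (q + (p - q) * ?\<theta> i))
      = (\<Sum>i\<in>{1..K}. ?\<phi> i * ln (max q (c * ?\<phi> i)))"
    by (intro sum.cong) (simp_all add: c)
  then have "ln (rr_lik p q N y \<theta>) < ln (rr_lik p q N y ?\<theta>)"
    using less assms(4)
    unfolding ln_rr_lik(2)[OF assms(5) pos(1)] ln_rr_lik(2)[OF assms(5) pos(2)] z_def
    by simp
  then show ?thesis using ln_rr_lik(1)[OF assms(5)] pos by simp
qed

theorem theorem1:
  fixes K N :: nat and p q :: real and y :: "nat \<Rightarrow> nat"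
  assumes "K \<ge> 2" and "0 < q" and "q < p" and "q = (1 - p) / (real K - 1)"
    and "N \<ge> 1" and "\<forall>u\<in>{1..N}. y u \<in> {1..K}"
  shows "(\<exists>!\<theta>. \<theta> \<in> simplex K \<and> (\<forall>\<theta>'\<in>simplex K. rr_lik p q N y \<theta>' \<le> rr_lik p q N y \<theta>))
       \<and> MLE_star p q K (hist N y) \<in> simplex K
       \<and> (\<forall>\<theta>'\<in>simplex K. rr_lik p q N y \<theta>' \<le> rr_lik p q N y (MLE_star p q K (hist N y)))"
proof -
  let ?L = "rr_lik p q N y" and ?\<theta> = "MLE_star p q K (hist N y)"
  have Kq: "real K * q + (p - q) = 1"
    using assms(1,4) by (simp add: field_simps)
  have in_simplex: "?\<theta> \<in> simplex K"
    using assms(2,3,5,6) Kq sum_hist by (intro MLE_star_in_simplex) auto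
  have less: "?L \<theta> < ?L ?\<theta>" if "\<theta> \<in> simplex K" "\<theta> \<noteq> ?\<theta>" for \<theta>
    using assms(2,3) Kq assms(5,6) that by (rule rr_lik_less_MLE_star)
  then have max: "\<forall>\<theta>\<in>simplex K. ?L \<theta> \<le> ?L ?\<theta>"
    by (metis order.refl order.strict_implies_order)
  have "\<theta> = ?\<theta>" if "\<theta> \<in> simplex K" "\<forall>\<theta>'\<in>simplex K. ?L \<theta>' \<le> ?L \<theta>" for \<theta>
    using less[OF that(1)] that(2) in_simplex by force
  then show ?thesis using in_simplex max by blast
qed

end
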